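(* Let $T>0$ and let $\{\Psi_n\}_{n\ge0}$ be the Legendre polynomial-exponential basis of $L^2_{e^{-2t}}(0,T)$. For every $k\in\mathbb{N}$ there exists a constant $C>0$, depending only on $k$ and $T$, such that $$\sum_{n=0}^\infty n^{2k}\left|\langle u,\Psi_n\rangle_{L^2_{e^{-2t}}(0,T)}\right|^2\le C\,\|u\|_{H^k(0,T)}^2\quad\text{for all } u\in H^k(0,T).$$
   Context: $P_n(x)=\frac{1}{2^n n!}\frac{d^n}{dx^n}(x^2-1)^n$ is the Legendre polynomial of degree $n$; $Q_n(t)=\sqrt{\tfrac{2n+1}{T}}P_n(\tfrac{2t}{T}-1)$, so $\{Q_n\}_{n\ge0}$ is an orthonormal basis of $L^2(0,T)$; $\Psi_n(t)=e^tQ_n(t)$. $L^2_{e^{-2t}}(0,T)$ is the space of functions $u$ with $\int_0^Te^{-2t}|u|^2dt<\infty$, with inner product $\langle u,v\rangle_{L^2_{e^{-2t}}(0,T)}=\int_0^Te^{-2t}u(t)v(t)\,dt$; $\{\Psi_n\}$ is an orthonormal basis of it. *)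

theory Defs
  imports "HOL-Analysis.Analysis"
begin

definition legendreP :: "nat \<Rightarrow> real \<Rightarrow> real" where
  "legendreP n x = (1 / (2 ^ n * fact n)) * (deriv ^^ n) (\<lambda>y. (y\<^sup>2 - 1) ^ n) x"

definition legendreQ :: "real \<Rightarrow> nat \<Rightarrow> real \<Rightarrow> real" where
  "legendreQ T n t = sqrt ((2 * real n + 1) / T) * legendreP n (2 * t / T - 1)"

definition legendrePsi :: "real \<Rightarrow> nat \<Rightarrow> real \<Rightarrow> real" where
  "legendrePsi T n t = exp t * legendreQ T n t"

definition weighted_inner :: "real \<Rightarrow> (real \<Rightarrow> real) \<Rightarrow> (real \<Rightarrow> real) \<Rightarrow> real" where
  "weighted_inner T u v = (LINT t:{0..T}|lborel. exp (-2 * t) * u t * v t)"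

definition test_fun :: "real \<Rightarrow> (real \<Rightarrow> real) \<Rightarrow> bool" where
  "test_fun T \<phi> \<longleftrightarrow> (\<forall>j x. ((deriv ^^ j) \<phi>) differentiable (at x))
      \<and> (\<exists>a b. 0 < a \<and> a \<le> b \<and> b < T \<and> (\<forall>x. x \<notin> {a..b} \<longrightarrow> \<phi> x = 0))"

definition L2_on :: "real \<Rightarrow> (real \<Rightarrow> real) \<Rightarrow> bool" where
  "L2_on T f \<longleftrightarrow> set_borel_measurable lborel {0..T} f
      \<and> set_integrable lborel {0..T} (\<lambda>t. (f t)\<^sup>2)"

text \<open>sobolev_data T k v: v 0 = u is in H^k(0,T), and v j is (a representative of)
  its j-th weak derivative, for j = 0..k.\<close>
definition sobolev_data :: "real \<Rightarrow> nat \<Rightarrow> (nat \<Rightarrow> real \<Rightarrow> real) \<Rightarrow> bool" where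
  "sobolev_data T k v \<longleftrightarrow> (\<forall>j\<le>k. L2_on T (v j))
     \<and> (\<forall>j\<le>k. \<forall>\<phi>. test_fun T \<phi> \<longrightarrow>
          (LINT t:{0..T}|lborel. v 0 t * (deriv ^^ j) \<phi> t)
            = (-1) ^ j * (LINT t:{0..T}|lborel. v j t * \<phi> t))"

definition Hk_norm_sq :: "real \<Rightarrow> nat \<Rightarrow> (nat \<Rightarrow> real \<Rightarrow> real) \<Rightarrow> real" where
  "Hk_norm_sq T k v = (\<Sum>j\<le>k. (LINT t:{0..T}|lborel. (v j t)\<^sup>2))"

end

theory Submission
  imports Defs "HOL-Real_Asymp.Real_Asymp"
begin

text \<open>
  Put rho(t) = t (T - t) and R_n = D^n (rho^n). Then Q_n is a multiple of R_n, and
  <u, Psi_n> is the L^2 pairing of u e^(-t) with Q_n. The Sturm-Liouville identity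
  D^k (rho^k D^k R_n) = (-1)^k Lambda R_n, with Lambda = (n+k)!/(n-k)!, writes R_n as a k-th
  derivative. Expanding D = E + 1, where (e^(-t) p)' = e^(-t) E p, and integrating by parts
  k times (the factor rho^k kills all boundary terms) moves the derivatives onto u: <u, Psi_n>
  becomes Lambda^(-1/2) times an alternating binomial combination of the coefficients of
  u^(i) e^(-t) rho^(k/2), i <= k, in the orthonormal family of the normalised rho^(k/2) D^k R_n,
  n >= k. As Lambda >= n^(2k) / 2^k for n >= 2k, Bessel's inequality bounds the high modes by
  the H^k norm, and the finitely many low modes by the L^2 norm of u. Weak derivatives are
  only available against compactly supported test functions, so e^(-t) rho q is reached as a
  limit of smooth cutoffs built from exp(-1/x).
\<close>

section \<open>Integrals of polynomials over [0, T]\<close>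

lemma continuous_on_poly_id: "continuous_on S (poly (p :: real poly))"
  by (intro continuous_intros)

lemma set_integrable_poly: "set_integrable lborel {a..b::real} (poly p)"
  by (intro borel_integrable_atLeastAtMost' continuous_on_poly_id)

definition poly_integral :: "real \<Rightarrow> real poly \<Rightarrow> real" where
  "poly_integral T p = (LINT t:{0..T}|lborel. poly p t)"

lemma poly_integral_add: "poly_integral T (p + q) = poly_integral T p + poly_integral T q"
  unfolding poly_integral_def poly_add
  by (rule set_integral_add(2)[OF set_integrable_poly set_integrable_poly])

lemma poly_integral_smult: "poly_integral T (smult c p) = c * poly_integral T p"
  unfolding poly_integral_def poly_smult by (rule set_integral_mult_right)

lemma poly_integral_minus: "poly_integral T (- p) = - poly_integral T p"
  using poly_integral_smult[of T "-1" p] by simp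

lemma poly_integral_pderiv:
  assumes "0 \<le> T"
  shows "poly_integral T (pderiv p) = poly p T - poly p 0"
proof -
  have "integral\<^sup>L lborel (\<lambda>x. indicator {0..T} x *\<^sub>R poly (pderiv p) x) = poly p T - poly p 0"
    by (intro integral_FTC_atLeastAtMost[OF assms] continuous_on_poly_id)
      (auto simp: has_real_derivative_iff_has_vector_derivative[symmetric]
        intro: has_field_derivative_at_within poly_DERIV)
  then show ?thesis
    by (simp add: poly_integral_def set_lebesgue_integral_def)
qed

lemma poly_integral_by_parts:
  assumes "0 \<le> T"
  shows "poly_integral T (pderiv p * q)
    = poly p T * poly q T - poly p 0 * poly q 0 - poly_integral T (p * pderiv q)"
  using poly_integral_pderiv[OF assms, of "p * q"]
  by (simp add: pderiv_mult poly_integral_add algebra_simps)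

lemma poly_integral_by_parts_higher:
  assumes "0 \<le> T"
    and "\<And>j. j < m \<Longrightarrow> poly ((pderiv^^j) p) 0 = 0 \<and> poly ((pderiv^^j) p) T = 0"
  shows "poly_integral T ((pderiv^^m) p * q) = (-1)^m * poly_integral T (p * (pderiv^^m) q)"
  using assms(2)
proof (induction m arbitrary: q)
  case (Suc m)
  have "poly_integral T ((pderiv^^Suc m) p * q) = - poly_integral T ((pderiv^^m) p * pderiv q)"
    using poly_integral_by_parts[OF assms(1), of "(pderiv^^m) p" q] Suc.prems[of m] by simp
  also have "\<dots> = (-1)^Suc m * poly_integral T (p * (pderiv^^m) (pderiv q))"
    using Suc.IH[of "pderiv q"] Suc.prems by simp
  finally show ?case
    by (simp only: funpow_Suc_right o_def)
qed simp

lemma higher_pderiv_eq_0: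
  fixes p :: "'a::{comm_semiring_1, semiring_no_zero_divisors} poly"
  assumes "degree p < n"
  shows "(pderiv^^n) p = 0"
  using assms by (intro poly_eqI) (simp add: coeff_higher_pderiv coeff_eq_0)

lemma higher_pderiv_degree:
  fixes p :: "'a::{comm_semiring_1, semiring_no_zero_divisors, semiring_char_0} poly"
  shows "(pderiv^^degree p) p = [:fact (degree p) * lead_coeff p:]"
  by (intro poly_eqI) (auto simp: coeff_higher_pderiv coeff_eq_0 pochhammer_fact coeff_pCons split: nat.split)

lemma funpow_power_dvd:
  fixes D :: "'a::comm_semiring_1 \<Rightarrow> 'a"
  assumes D: "\<And>m p. r ^ Suc m dvd p \<Longrightarrow> r ^ m dvd D p"
    and "j \<le> i" "r ^ i dvd p"
  shows "r ^ (i - j) dvd (D^^j) p"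
  using assms(2)
proof (induction j)
  case (Suc j)
  then have "r ^ Suc (i - Suc j) dvd (D^^j) p"
    by (simp add: Suc_diff_Suc)
  then show ?case
    by (simp add: D)
qed (simp add: assms(3))

lemma pderiv_power_dvd:
  fixes r :: "'a::{comm_ring_1, semiring_no_zero_divisors} poly"
  assumes "r ^ Suc m dvd p"
  shows "r ^ m dvd pderiv p"
proof -
  obtain q where "p = r ^ Suc m * q"
    using assms by blast
  then have "pderiv p = r ^ m * (smult (of_nat (Suc m)) (pderiv r) * q + r * pderiv q)"
    by (simp add: pderiv_mult pderiv_power_Suc algebra_simps del: power_Suc) (simp add: mult_ac)
  then show ?thesis
    by simp
qed

lemma poly_eq_0_if_power_dvd:
  assumes "r ^ Suc m dvd p" "poly r a = 0"
  shows "poly p a = 0"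
  using assms by (auto simp: dvd_def)

lemma poly_integral_mult_const: "poly_integral T (p * [:c:]) = c * poly_integral T p"
  by (simp add: poly_integral_def mult.commute)

lemma poly_integral_beta:
  assumes "0 \<le> T"
  shows "poly_integral T ([:0,1:]^a * [:T,-1:]^b) = fact a * fact b / fact (a+b+1) * T^(a+b+1)"
proof -
  define X Y where "X = [:0,1::real:]" and "Y = [:T,-1:]"
  have X: "pderiv X = 1" "poly X t = t" and Y: "pderiv Y = -1" "poly Y T = 0" for t
    by (simp_all add: X_def Y_def pderiv_pCons one_pCons)
  have "poly_integral T (X^a * Y^b) = fact a * fact b / fact (a+b+1) * T^(a+b+1)" for a b
  proof (induction b arbitrary: a)
    case 0
    have "pderiv (X^Suc a) = smult (real a + 1) (X^a)"
      by (simp add: pderiv_power_Suc X add.commute del: power_Suc)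
    then have "(real a + 1) * poly_integral T (X^a * Y^0) = T^Suc a"
      using poly_integral_pderiv[OF assms, of "X^Suc a"] by (simp add: poly_integral_smult X)
    also have "\<dots> = (real a + 1) * (fact a * fact 0 / fact (a+0+1) * T^(a+0+1))"
      by (simp add: add.commute)
    finally show ?case
      by (rule mult_left_cancel[THEN iffD1, rotated]) simp
  next
    case (Suc b)
    have "pderiv (X^Suc a) = smult (real a + 1) (X^a)"
      by (simp add: pderiv_power_Suc X add.commute del: power_Suc)
    moreover have "X^Suc a * pderiv (Y^Suc b) = - smult (real b + 1) (X^Suc a * Y^b)"
      by (simp add: pderiv_power_Suc Y algebra_simps del: power_Suc)
    ultimately have "(real a + 1) * poly_integral T (X^a * Y^Suc b)
        = (real b + 1) * poly_integral T (X^Suc a * Y^b)"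
      using poly_integral_by_parts[OF assms, of "X^Suc a" "Y^Suc b"]
      by (simp add: poly_integral_smult poly_integral_minus X Y)
    also have "\<dots> = (real b + 1) * (fact (Suc a) * fact b / fact (Suc a + b + 1) * T^(Suc a + b + 1))"
      by (simp only: Suc.IH)
    also have "\<dots> = (real a + 1) * (fact a * fact (Suc b) / fact (a + Suc b + 1) * T^(a + Suc b + 1))"
      by (simp add: algebra_simps)
    finally show ?case
      by (rule mult_left_cancel[THEN iffD1, rotated]) simp
  qed
  then show ?thesis
    by (simp add: X_def Y_def)
qed

section \<open>Shifted Legendre polynomials\<close>

definition rho :: "real \<Rightarrow> real poly" where
  "rho T = [:0, T, -1:]"

lemma poly_rho: "poly (rho T) t = t * (T - t)"
  by (simp add: rho_def algebra_simps)

lemma rho_eq: "rho T = [:0,1:] * [:T,-1:]"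
  by (simp add: rho_def)

lemma degree_rho_power: "degree (rho T ^ n) = 2 * n"
  by (simp add: degree_power_eq rho_def)

definition rodrigues :: "real \<Rightarrow> nat \<Rightarrow> real poly" where
  "rodrigues T n = (pderiv^^n) (rho T ^ n)"

lemma degree_rodrigues: "degree (rodrigues T n) = n"
  by (simp add: rodrigues_def degree_higher_pderiv degree_rho_power)

lemma higher_pderiv_rho_power_mult_vanishes:
  assumes "j < i"
  shows "poly ((pderiv^^j) (rho T ^ i * p)) 0 = 0 \<and> poly ((pderiv^^j) (rho T ^ i * p)) T = 0"
proof -
  have "rho T ^ Suc (i - Suc j) dvd (pderiv^^j) (rho T ^ i * p)"
    using funpow_power_dvd[of "rho T" pderiv j i, OF pderiv_power_dvd] assms
    by (simp add: Suc_diff_Suc)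
  then show ?thesis
    by (auto intro: poly_eq_0_if_power_dvd simp: poly_rho)
qed

lemma poly_integral_rodrigues_mult:
  assumes "0 \<le> T"
  shows "poly_integral T (rodrigues T n * p) = (-1)^n * poly_integral T (rho T ^ n * (pderiv^^n) p)"
  unfolding rodrigues_def
  using poly_integral_by_parts_higher[OF assms] higher_pderiv_rho_power_mult_vanishes[of _ n T 1]
  by simp

lemma rodrigues_orthogonal:
  assumes "0 \<le> T" "m \<noteq> n"
  shows "poly_integral T (rodrigues T n * rodrigues T m) = 0"
proof -
  have *: "poly_integral T (rodrigues T n * rodrigues T m) = 0" if "m < n" for m n
  proof -
    have "(pderiv^^n) (rodrigues T m) = 0"
      using that by (simp add: higher_pderiv_eq_0 degree_rodrigues)
    then show ?thesis
      using poly_integral_rodrigues_mult[OF assms(1), of n "rodrigues T m"]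
      by (simp add: poly_integral_def)
  qed
  show ?thesis
    using assms(2) *[of m n] *[of n m] by (cases "m < n") (auto simp: mult.commute)
qed

lemma higher_pderiv_rodrigues_self: "(pderiv^^n) (rodrigues T n) = [:fact (2*n) * (-1)^n:]"
proof -
  have "(pderiv^^n) (rodrigues T n) = (pderiv^^degree (rho T ^ n)) (rho T ^ n)"
    by (simp add: rodrigues_def degree_rho_power mult_2 funpow_add)
  also have "\<dots> = [:fact (2*n) * (-1)^n:]"
    using higher_pderiv_degree[of "rho T ^ n"] lead_coeff_power[of "rho T" n]
    unfolding degree_rho_power by (simp add: rho_def)
  finally show ?thesis .
qed

lemma rodrigues_norm:
  assumes "0 \<le> T"
  shows "poly_integral T (rodrigues T n * rodrigues T n) = (fact n)^2 * T^(2*n+1) / (2 * real n + 1)"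
proof -
  have sign: "(-1)^n * (c * (-1)^n * x) = c * (x::real)" for c x
    by (simp add: mult_ac flip: power_add)
  have "poly_integral T (rodrigues T n * rodrigues T n)
      = fact (2*n) * poly_integral T ([:0,1:]^n * [:T,-1:]^n)"
    unfolding poly_integral_rodrigues_mult[OF assms] higher_pderiv_rodrigues_self
      poly_integral_mult_const rho_eq power_mult_distrib sign ..
  also have "\<dots> = fact (2*n) * (fact n * fact n / fact (2*n+1) * T^(2*n+1))"
    by (simp only: poly_integral_beta[OF assms] mult_2)
  also have "\<dots> = (fact n)^2 * T^(2*n+1) / (2 * real n + 1)"
    by (simp add: power2_eq_square)
  finally show ?thesis .
qed

lemma pderiv_rho: "pderiv (rho T) = [:T, -2:]"
  by (simp add: rho_def pderiv_pCons)

lemma pderiv_rho_ode: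
  "pderiv (rho T * pderiv (pderiv g) + smult a (pderiv (rho T) * pderiv g) + smult b g)
    = rho T * pderiv (pderiv (pderiv g)) + smult (a + 1) (pderiv (rho T) * pderiv (pderiv g))
      + smult (b - 2 * a) (pderiv g)"
  by (rule poly_eq_poly_eq_iff[THEN iffD1], rule ext)
    (simp add: pderiv_mult pderiv_add pderiv_minus pderiv_smult pderiv_rho pderiv_pCons poly_rho
      algebra_simps)

lemma higher_pderiv_rho_power_ode:
  "rho T * pderiv (pderiv ((pderiv^^m) (rho T ^ n)))
    + smult (real m + 1 - real n) (pderiv (rho T) * pderiv ((pderiv^^m) (rho T ^ n)))
    + smult ((real m + 1) * (2 * real n - real m)) ((pderiv^^m) (rho T ^ n)) = 0"
proof (induction m)
  case 0
  have "rho T * pderiv (rho T ^ n) - smult (real n) (pderiv (rho T) * rho T ^ n) = 0"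
    by (cases n) (simp_all add: pderiv_power_Suc algebra_simps del: power_Suc, simp add: mult_ac)
  then have "pderiv (rho T * pderiv (rho T ^ n) - smult (real n) (pderiv (rho T) * rho T ^ n)) = 0"
    by simp
  moreover have "pderiv (rho T * pderiv (rho T ^ n) - smult (real n) (pderiv (rho T) * rho T ^ n))
      = rho T * pderiv (pderiv (rho T ^ n)) + smult (1 - real n) (pderiv (rho T) * pderiv (rho T ^ n))
        + smult (2 * real n) (rho T ^ n)"
    by (rule poly_eq_poly_eq_iff[THEN iffD1], rule ext)
      (simp add: pderiv_mult pderiv_diff pderiv_add pderiv_minus pderiv_smult pderiv_rho pderiv_pCons
        poly_rho algebra_simps)
  ultimately show ?case
    by simp
next
  case (Suc m)
  from arg_cong[OF Suc.IH, of pderiv] show ?case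
    unfolding pderiv_rho_ode by (simp add: algebra_simps)
qed

lemma higher_pderiv_rodrigues_ode:
  "rho T * pderiv (pderiv ((pderiv^^j) (rodrigues T n)))
    + smult (real j + 1) (pderiv (rho T) * pderiv ((pderiv^^j) (rodrigues T n)))
    + smult ((real n + real j + 1) * (real n - real j)) ((pderiv^^j) (rodrigues T n)) = 0"
proof -
  have "(pderiv^^j) (rodrigues T n) = (pderiv^^(j + n)) (rho T ^ n)"
    by (simp add: rodrigues_def funpow_add)
  moreover have "real (j + n) + 1 - real n = real j + 1"
    and "(real (j + n) + 1) * (2 * real n - real (j + n)) = (real n + real j + 1) * (real n - real j)"
    by (simp_all add: algebra_simps)
  ultimately show ?thesis
    using higher_pderiv_rho_power_ode[of T "j + n" n] by (simp add: ac_simps)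
qed

lemma pderiv_rho_power_mult_higher_pderiv_rodrigues:
  "pderiv (rho T ^ Suc j * pderiv ((pderiv^^j) (rodrigues T n)))
    = smult (- ((real n + real j + 1) * (real n - real j))) (rho T ^ j * (pderiv^^j) (rodrigues T n))"
proof -
  let ?y = "(pderiv^^j) (rodrigues T n)"
  have "pderiv (rho T ^ Suc j * pderiv ?y)
      = rho T ^ j * (rho T * pderiv (pderiv ?y) + smult (real j + 1) (pderiv (rho T) * pderiv ?y))"
    by (simp add: pderiv_mult pderiv_power_Suc algebra_simps del: power_Suc) (simp add: algebra_simps)
  also have "rho T * pderiv (pderiv ?y) + smult (real j + 1) (pderiv (rho T) * pderiv ?y)
      = smult (- ((real n + real j + 1) * (real n - real j))) ?y"
    using higher_pderiv_rodrigues_ode[of T j n] by (simp add: eq_neg_iff_add_eq_0)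
  finally show ?thesis
    by simp
qed

text \<open>
  By the previous lemma, D^j R_n is an eigenfunction of y |-> (rho^(j+1) y')' / rho^j with
  eigenvalue -(n+j+1)(n-j); \<open>eigen_prod n k\<close> is the product of the first k of these numbers
  (up to sign), i.e. (n+k)!/(n-k)! for k <= n and 0 otherwise.
\<close>

definition eigen_prod :: "nat \<Rightarrow> nat \<Rightarrow> real" where
  "eigen_prod n k = (\<Prod>j<k. (real n + real j + 1) * (real n - real j))"

lemma eigen_prod_pos: "k \<le> n \<Longrightarrow> 0 < eigen_prod n k"
  unfolding eigen_prod_def by (rule prod_pos) auto

lemma eigen_prod_lower_bound:
  assumes "2 * k \<le> n"
  shows "real n ^ (2 * k) \<le> 2 ^ k * eigen_prod n k"
proof -
  have "real n ^ 2 \<le> 2 * ((real n + real j + 1) * (real n - real j))" if "j < k" for j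
  proof -
    have "real n * (real n / 2) \<le> (real n + real j + 1) * (real n - real j)"
      using assms that by (intro mult_mono) auto
    then show ?thesis
      by (simp add: power2_eq_square)
  qed
  then have "(\<Prod>j<k. real n ^ 2) \<le> (\<Prod>j<k. 2 * ((real n + real j + 1) * (real n - real j)))"
    by (intro prod_mono) auto
  then show ?thesis
    by (simp add: eigen_prod_def prod.distrib power_mult)
qed

lemma higher_pderiv_rho_power_mult_higher_pderiv_rodrigues:
  "(pderiv^^k) (rho T ^ k * (pderiv^^k) (rodrigues T n))
    = smult ((-1)^k * eigen_prod n k) (rodrigues T n)"
proof (induction k)
  case (Suc k)
  have "(pderiv^^Suc k) (rho T ^ Suc k * (pderiv^^Suc k) (rodrigues T n))
      = (pderiv^^k) (pderiv (rho T ^ Suc k * pderiv ((pderiv^^k) (rodrigues T n))))"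
    by (simp add: funpow_swap1)
  also have "\<dots> = smult (- ((real n + real k + 1) * (real n - real k)) * ((-1)^k * eigen_prod n k))
      (rodrigues T n)"
    by (simp only: pderiv_rho_power_mult_higher_pderiv_rodrigues higher_pderiv_smult Suc.IH smult_smult)
  finally show ?case
    by (simp add: eigen_prod_def mult_ac)
qed (simp add: eigen_prod_def)

lemma poly_integral_weighted_higher_pderiv_rodrigues:
  assumes "0 \<le> T"
  shows "poly_integral T (rho T ^ k * (pderiv^^k) (rodrigues T n) * (pderiv^^k) (rodrigues T m))
    = eigen_prod n k * poly_integral T (rodrigues T n * rodrigues T m)"
proof -
  have "poly_integral T ((pderiv^^k) (rho T ^ k * (pderiv^^k) (rodrigues T n)) * rodrigues T m)
      = (-1)^k * poly_integral T (rho T ^ k * (pderiv^^k) (rodrigues T n) * (pderiv^^k) (rodrigues T m))"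
    by (rule poly_integral_by_parts_higher[OF assms higher_pderiv_rho_power_mult_vanishes])
  then show ?thesis
    by (simp add: higher_pderiv_rho_power_mult_higher_pderiv_rodrigues poly_integral_smult mult.assoc)
qed

lemma higher_deriv_poly: "(deriv^^n) (poly p) = poly ((pderiv^^n) (p :: real poly))"
proof (induction n)
  case (Suc n)
  have "deriv (poly q) = poly (pderiv q)" for q :: "real poly"
    by (intro ext DERIV_imp_deriv poly_DERIV)
  then show ?case
    by (simp add: Suc.IH)
qed simp

lemma higher_pderiv_pcompose_linear:
  "(pderiv^^n) (p \<circ>\<^sub>p [:b, a:]) = smult (a^n) ((pderiv^^n) p \<circ>\<^sub>p [:b, a::'a::idom:])"
  by (induction n) (simp_all add: pderiv_smult pderiv_pcompose pderiv_pCons mult.commute)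

lemma pcompose_power: "(p ^ n) \<circ>\<^sub>p q = (p \<circ>\<^sub>p q) ^ n"
  for p q :: "'a::comm_semiring_1 poly"
  by (induction n) (simp_all add: pcompose_mult pcompose_1)

definition legendre_scale :: "real \<Rightarrow> nat \<Rightarrow> real" where
  "legendre_scale T n = sqrt ((2 * real n + 1) / T) * (-1)^n / (T^n * fact n)"

lemma legendreP_affine_eq_rodrigues:
  assumes "T > 0"
  shows "legendreP n (2 * t / T - 1) = 1 / (2 ^ n * fact n) * ((-2/T)^n * poly (rodrigues T n) t)"
proof -
  let ?L = "[:-1, 2/T:]" and ?P = "[:-1, 0, 1:] :: real poly"
  have "(\<lambda>y::real. (y\<^sup>2 - 1) ^ n) = poly (?P ^ n)"
    by (auto simp: power2_eq_square)
  then have P: "legendreP n x = 1 / (2 ^ n * fact n) * poly ((pderiv^^n) (?P ^ n)) x" for x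
    by (simp add: legendreP_def higher_deriv_poly)
  have PL: "?P \<circ>\<^sub>p ?L = smult (-4/T^2) (rho T)"
    using assms by (intro poly_eq_poly_eq_iff[THEN iffD1] ext)
      (simp add: poly_pcompose rho_def field_simps power2_eq_square)
  have "smult ((2/T)^n) ((pderiv^^n) (?P ^ n) \<circ>\<^sub>p ?L) = smult ((-4/T^2)^n) (rodrigues T n)"
    by (simp only: higher_pderiv_pcompose_linear[symmetric] pcompose_power PL smult_power
        higher_pderiv_smult rodrigues_def)
  from arg_cong[OF this, of "\<lambda>p. poly p t"]
  have "(2/T)^n * poly ((pderiv^^n) (?P ^ n)) (poly ?L t) = (-4/T^2)^n * poly (rodrigues T n) t"
    by (simp only: poly_pcompose poly_smult)
  moreover have "poly ?L t = 2 * t / T - 1"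
    by simp
  moreover have "(-4/T^2)^n = (2/T)^n * (-2/T)^n"
    using assms by (simp add: power_mult_distrib[symmetric] power2_eq_square)
  ultimately have "(2/T)^n * poly ((pderiv^^n) (?P ^ n)) (2 * t / T - 1)
      = (2/T)^n * ((-2/T)^n * poly (rodrigues T n) t)"
    by (simp only: mult.assoc)
  then have "poly ((pderiv^^n) (?P ^ n)) (2 * t / T - 1) = (-2/T)^n * poly (rodrigues T n) t"
    by (rule mult_left_cancel[THEN iffD1, rotated]) (use assms in simp)
  then show ?thesis
    by (simp only: P)
qed

lemma legendreQ_eq_rodrigues:
  assumes "T > 0"
  shows "legendreQ T n t = legendre_scale T n * poly (rodrigues T n) t"
proof -
  have "1 / (2 ^ n * fact n) * (-2/T)^n = 1 / (2 ^ n * fact n) * ((-1)^n * 2^n / T^n)"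
    by (simp only: power_divide power_minus[of "2::real"])
  also have "\<dots> = (-1)^n / (T^n * fact n)"
    by (simp add: field_simps)
  finally have C: "1 / (2 ^ n * fact n) * (-2/T)^n = (-1)^n / (T^n * fact n)" .
  have "legendreQ T n t
      = sqrt ((2 * real n + 1) / T) * ((1 / (2 ^ n * fact n) * (-2/T)^n) * poly (rodrigues T n) t)"
    by (simp only: legendreQ_def legendreP_affine_eq_rodrigues[OF assms] mult.assoc)
  then show ?thesis
    unfolding C by (simp add: legendre_scale_def)
qed

lemma legendre_scale_rodrigues_orthonormal:
  assumes "T > 0"
  shows "legendre_scale T n * legendre_scale T m * poly_integral T (rodrigues T n * rodrigues T m)
    = (if n = m then 1 else 0)"
proof (cases "n = m")
  case True
  have "legendre_scale T n * legendre_scale T n = (2 * real n + 1) / (T * (T^n * fact n)^2)"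
    using assms by (simp add: legendre_scale_def power2_eq_square field_simps)
  moreover have "T^(2*n+1) = T * (T^n)^2"
    by (simp add: power_mult[symmetric] mult.commute)
  ultimately show ?thesis
    using True assms by (simp add: rodrigues_norm field_simps)
next
  case False
  then show ?thesis
    using assms by (simp add: rodrigues_orthogonal)
qed

lemma legendreQ_orthonormal:
  assumes "T > 0"
  shows "(LINT t:{0..T}|lborel. legendreQ T n t * legendreQ T m t) = (if n = m then 1 else 0)"
proof -
  have "(LINT t:{0..T}|lborel. legendreQ T n t * legendreQ T m t)
      = legendre_scale T n * legendre_scale T m * poly_integral T (rodrigues T n * rodrigues T m)"
    by (simp add: legendreQ_eq_rodrigues[OF assms] poly_integral_def mult_ac)
  then show ?thesis
    by (simp add: legendre_scale_rodrigues_orthonormal[OF assms])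
qed

lemma continuous_on_legendreQ:
  assumes "T > 0"
  shows "continuous_on S (legendreQ T n)"
proof -
  have "legendreQ T n = (\<lambda>t. legendre_scale T n * poly (rodrigues T n) t)"
    using legendreQ_eq_rodrigues[OF assms] by auto
  then show ?thesis
    by (metis continuous_on_mult_left continuous_on_poly_id)
qed

section \<open>Square-integrable functions on [0, T]\<close>

lemma set_integrable_sum:
  assumes "\<And>i. i \<in> I \<Longrightarrow> set_integrable M A (f i)"
  shows "set_integrable M A (\<lambda>x. \<Sum>i\<in>I. f i x :: real)"
  using assms unfolding set_integrable_def scaleR_sum_right
  by (intro Bochner_Integration.integrable_sum)

lemma set_integral_sum:
  assumes "\<And>i. i \<in> I \<Longrightarrow> set_integrable M A (f i)"
  shows "(LINT x:A|M. (\<Sum>i\<in>I. f i x)) = (\<Sum>i\<in>I. (LINT x:A|M. f i x :: real))"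
  using assms unfolding set_lebesgue_integral_def set_integrable_def scaleR_sum_right
  by (intro Bochner_Integration.integral_sum)

lemma set_integral_nonneg:
  assumes "\<And>x. x \<in> A \<Longrightarrow> 0 \<le> f x"
  shows "0 \<le> (LINT x:A|M. f x :: real)"
  unfolding set_lebesgue_integral_def
  by (rule integral_nonneg_AE) (use assms in \<open>auto split: split_indicator\<close>)

lemma set_borel_measurable_mult:
  assumes "set_borel_measurable M A f" "set_borel_measurable M A g"
  shows "set_borel_measurable M A (\<lambda>x. f x * g x :: real)"
proof -
  have "(\<lambda>x. indicator A x *\<^sub>R (f x * g x)) = (\<lambda>x. (indicator A x *\<^sub>R f x) * (indicator A x *\<^sub>R g x))"
    by (auto split: split_indicator)
  then show ?thesis
    using assms by (simp add: set_borel_measurable_def)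
qed

lemma continuous_on_Icc_bound:
  fixes f :: "real \<Rightarrow> real"
  assumes "continuous_on {a..b} f"
  obtains M where "\<And>t. t \<in> {a..b} \<Longrightarrow> \<bar>f t\<bar> \<le> M"
proof -
  have "bounded (f ` {a..b})"
    by (rule compact_imp_bounded[OF compact_continuous_image[OF assms compact_Icc]])
  then obtain M where "\<forall>y\<in>f ` {a..b}. norm y \<le> M"
    unfolding bounded_iff by blast
  then have "\<And>t. t \<in> {a..b} \<Longrightarrow> \<bar>f t\<bar> \<le> M"
    by auto
  then show ?thesis
    by (rule that)
qed

lemma L2_on_continuous:
  assumes "continuous_on {0..T} f"
  shows "L2_on T f"
  unfolding L2_on_def set_borel_measurable_def
  using borel_measurable_continuous_on_indicator[OF _ assms]
    borel_integrable_atLeastAtMost'[OF continuous_on_power[OF assms]]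
  by simp

lemma set_integrable_L2_mult:
  assumes "L2_on T f" "L2_on T g"
  shows "set_integrable lborel {0..T} (\<lambda>t. f t * g t)"
proof (rule set_integrable_bound)
  show "set_integrable lborel {0..T} (\<lambda>t. (f t)\<^sup>2 + (g t)\<^sup>2)"
    using assms unfolding L2_on_def by (intro set_integral_add(1)) auto
  show "set_borel_measurable lborel {0..T} (\<lambda>t. f t * g t)"
    using assms unfolding L2_on_def by (intro set_borel_measurable_mult) auto
  have "\<bar>a * b\<bar> \<le> a\<^sup>2 + b\<^sup>2" for a b :: real
  proof -
    have "2 * (\<bar>a\<bar> * \<bar>b\<bar>) \<le> a\<^sup>2 + b\<^sup>2"
      using sum_squares_bound[of "\<bar>a\<bar>" "\<bar>b\<bar>"] by (simp add: mult.assoc)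
    moreover have "0 \<le> \<bar>a\<bar> * \<bar>b\<bar>"
      by simp
    ultimately have "\<bar>a\<bar> * \<bar>b\<bar> \<le> a\<^sup>2 + b\<^sup>2"
      by linarith
    then show ?thesis
      by (simp add: abs_mult)
  qed
  then show "AE t in lborel. t \<in> {0..T} \<longrightarrow> norm (f t * g t) \<le> norm ((f t)\<^sup>2 + (g t)\<^sup>2)"
    by simp
qed

lemma set_integrable_L2:
  assumes "L2_on T f"
  shows "set_integrable lborel {0..T} f"
  using set_integrable_L2_mult[OF assms L2_on_continuous[of T "\<lambda>_. 1"]] by simp

lemma L2_on_mult_continuous:
  assumes g: "L2_on T g" and f: "continuous_on {0..T} f"
  shows "L2_on T (\<lambda>t. g t * f t)"
proof -
  obtain M where M: "\<And>t. t \<in> {0..T} \<Longrightarrow> \<bar>f t\<bar> \<le> M"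
    using continuous_on_Icc_bound[OF f] by blast
  have meas: "set_borel_measurable lborel {0..T} (\<lambda>t. g t * f t)"
    using g L2_on_continuous[OF f] unfolding L2_on_def
    by (intro set_borel_measurable_mult) auto
  have "set_integrable lborel {0..T} (\<lambda>t. (g t * f t)\<^sup>2)"
  proof (rule set_integrable_bound)
    show "set_integrable lborel {0..T} (\<lambda>t. M\<^sup>2 * (g t)\<^sup>2)"
      using g unfolding L2_on_def by simp
    show "set_borel_measurable lborel {0..T} (\<lambda>t. (g t * f t)\<^sup>2)"
      using set_borel_measurable_mult[OF meas meas] by (simp add: power2_eq_square)
    have "(g t * f t)\<^sup>2 \<le> M\<^sup>2 * (g t)\<^sup>2" if "t \<in> {0..T}" for t
    proof -
      have "(f t)\<^sup>2 \<le> M\<^sup>2"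
        using power_mono[OF M[OF that] abs_ge_zero, of 2] by simp
      then have "(f t)\<^sup>2 * (g t)\<^sup>2 \<le> M\<^sup>2 * (g t)\<^sup>2"
        by (rule mult_right_mono) simp
      then show ?thesis
        by (simp add: power_mult_distrib mult.commute)
    qed
    then show "AE t in lborel. t \<in> {0..T} \<longrightarrow> norm ((g t * f t)\<^sup>2) \<le> norm (M\<^sup>2 * (g t)\<^sup>2)"
      by simp
  qed
  with meas show ?thesis
    by (simp add: L2_on_def)
qed

lemma bessel_inequality:
  assumes g: "L2_on T g" and S: "finite S"
    and f: "\<And>n. n \<in> S \<Longrightarrow> L2_on T (f n)"
    and orth: "\<And>n m. n \<in> S \<Longrightarrow> m \<in> S \<Longrightarrow>
      (LINT t:{0..T}|lborel. f n t * f m t) = (if n = m then 1 else 0)"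
  shows "(\<Sum>n\<in>S. (LINT t:{0..T}|lborel. g t * f n t)\<^sup>2) \<le> (LINT t:{0..T}|lborel. (g t)\<^sup>2)"
proof -
  define a where "a n = (LINT t:{0..T}|lborel. g t * f n t)" for n
  have int_g: "set_integrable lborel {0..T} (\<lambda>t. (g t)\<^sup>2)"
    using g unfolding L2_on_def by simp
  have int_gf: "set_integrable lborel {0..T} (\<lambda>t. 2 * a n * (g t * f n t))" if "n \<in> S" for n
    using set_integrable_L2_mult[OF g f[OF that]] by simp
  have int_ff: "set_integrable lborel {0..T} (\<lambda>t. a n * a m * (f n t * f m t))"
    if "n \<in> S" "m \<in> S" for n m
    using set_integrable_L2_mult[OF f[OF that(1)] f[OF that(2)]] by simp
  have square: "(g t - (\<Sum>n\<in>S. a n * f n t))\<^sup>2 = (g t)\<^sup>2 - (\<Sum>n\<in>S. 2 * a n * (g t * f n t))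
      + (\<Sum>n\<in>S. \<Sum>m\<in>S. a n * a m * (f n t * f m t))" for t
    by (simp add: power2_diff power2_eq_square sum_product sum_distrib_left algebra_simps)
  have "0 \<le> (LINT t:{0..T}|lborel. (g t - (\<Sum>n\<in>S. a n * f n t))\<^sup>2)"
    by (rule set_integral_nonneg) simp
  also have "\<dots> = (LINT t:{0..T}|lborel. (g t)\<^sup>2)
      - (\<Sum>n\<in>S. LINT t:{0..T}|lborel. 2 * a n * (g t * f n t))
      + (\<Sum>n\<in>S. \<Sum>m\<in>S. LINT t:{0..T}|lborel. a n * a m * (f n t * f m t))"
    unfolding square
    by (simp add: int_g int_gf int_ff set_integrable_sum set_integral_sum)
  also have "\<dots> = (LINT t:{0..T}|lborel. (g t)\<^sup>2) - (\<Sum>n\<in>S. (a n)\<^sup>2)"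
    using S by (simp add: orth a_def power2_eq_square if_distrib[of "(*) _"]
        sum_distrib_left[symmetric] mult.assoc cong: if_cong)
  finally show ?thesis
    by (simp add: a_def)
qed

lemma set_integral_dominated_convergence_Icc:
  fixes u c0 :: "real \<Rightarrow> real" and c :: "nat \<Rightarrow> real \<Rightarrow> real"
  assumes u: "set_integrable lborel {0..T} u"
    and c: "\<And>i. continuous_on {0..T} (c i)" and c0: "continuous_on {0..T} c0"
    and bound: "\<And>i t. t \<in> {0..T} \<Longrightarrow> \<bar>c i t\<bar> \<le> B"
    and lim: "\<And>t. t \<in> {0<..<T} \<Longrightarrow> (\<lambda>i. c i t) \<longlonglongrightarrow> c0 t"
  shows "(\<lambda>i. LINT t:{0..T}|lborel. u t * c i t) \<longlonglongrightarrow> (LINT t:{0..T}|lborel. u t * c0 t)"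
proof -
  have meas: "set_borel_measurable lborel {0..T} (\<lambda>t. u t * h t)" if "continuous_on {0..T} h" for h
    using u L2_on_continuous[OF that] unfolding L2_on_def
    by (intro set_borel_measurable_mult borel_measurable_integrable) (auto simp: set_integrable_def
        set_borel_measurable_def)
  have "AE t in lborel. t \<noteq> 0 \<and> t \<noteq> T"
    by (intro AE_conjI AE_lborel_singleton)
  then have conv: "AE t in lborel. (\<lambda>i. indicator {0..T} t *\<^sub>R (u t * c i t))
      \<longlonglongrightarrow> indicator {0..T} t *\<^sub>R (u t * c0 t)"
    by eventually_elim (auto split: split_indicator intro!: tendsto_mult_left lim)
  have dom: "AE t in lborel. norm (indicator {0..T} t *\<^sub>R (u t * c i t))
      \<le> B * (indicator {0..T} t *\<^sub>R \<bar>u t\<bar>)" for i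
  proof (intro AE_I2)
    fix t
    have "\<bar>u t\<bar> * \<bar>c i t\<bar> \<le> \<bar>u t\<bar> * B" if "t \<in> {0..T}"
      using bound[OF that] by (rule mult_left_mono) simp
    then show "norm (indicator {0..T} t *\<^sub>R (u t * c i t)) \<le> B * (indicator {0..T} t *\<^sub>R \<bar>u t\<bar>)"
      by (auto split: split_indicator simp: abs_mult mult.commute)
  qed
  have "integrable lborel (\<lambda>t. B * (indicator {0..T} t *\<^sub>R \<bar>u t\<bar>))"
    using set_integrable_abs[OF u] by (simp add: set_integrable_def)
  from integral_dominated_convergence[OF meas[OF c0, unfolded set_borel_measurable_def]
      meas[OF c, unfolded set_borel_measurable_def] this conv dom]
  show ?thesis
    unfolding set_lebesgue_integral_def .
qed

section \<open>Smooth cutoffs\<close>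

definition exp_inv_poly :: "real poly \<Rightarrow> real \<Rightarrow> real" where
  "exp_inv_poly p x = (if x > 0 then poly p (inverse x) * exp (- inverse x) else 0)"

text \<open>
  Differentiation does not leave the family of functions poly p (1/x) exp(-1/x), so they are
  smooth, and flat at 0.
\<close>

definition exp_inv_pderiv :: "real poly \<Rightarrow> real poly" where
  "exp_inv_pderiv p = [:0, 0, 1:] * (p - pderiv p)"

lemma tendsto_poly_times_exp_minus: "((\<lambda>s. poly r s * exp (- s)) \<longlongrightarrow> (0::real)) at_top"
proof -
  have "((\<lambda>s. \<Sum>i\<le>degree r. coeff r i * (s ^ i / exp s)) \<longlongrightarrow> (\<Sum>i\<le>degree r. coeff r i * 0)) at_top"
    by (intro tendsto_sum tendsto_mult tendsto_const tendsto_power_div_exp_0)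
  then show ?thesis
    by (simp add: poly_altdef sum_distrib_right exp_minus divide_inverse mult.assoc)
qed

lemma exp_inv_poly_has_derivative_0: "(exp_inv_poly p has_real_derivative 0) (at 0)"
proof -
  have "((\<lambda>h. exp_inv_poly p h / h) \<longlongrightarrow> 0) (at_left 0)"
    by (rule tendsto_eventually) (simp add: eventually_at_filter exp_inv_poly_def)
  moreover have "((\<lambda>h. exp_inv_poly p h / h) \<longlongrightarrow> 0) (at_right 0)"
  proof (rule Lim_transform_eventually)
    show "((\<lambda>h. poly (pCons 0 p) (inverse h) * exp (- inverse h)) \<longlongrightarrow> (0::real)) (at_right 0)"
      by (rule filterlim_compose[OF tendsto_poly_times_exp_minus filterlim_inverse_at_top_right])
    show "\<forall>\<^sub>F h in at_right 0. poly (pCons 0 p) (inverse h) * exp (- inverse h) = exp_inv_poly p h / h"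
      by (simp add: eventually_at_filter exp_inv_poly_def divide_inverse)
  qed
  ultimately have "((\<lambda>h. exp_inv_poly p h / h) \<longlongrightarrow> 0) (at 0)"
    by (rule filterlim_split_at)
  then show ?thesis
    unfolding DERIV_def by (simp add: exp_inv_poly_def)
qed

lemma exp_inv_poly_has_derivative:
  "(exp_inv_poly p has_real_derivative exp_inv_poly (exp_inv_pderiv p) x) (at x)"
proof -
  consider "x > 0" | "x < 0" | "x = 0"
    by linarith
  then show ?thesis
  proof cases
    case 1
    have "((\<lambda>y. poly p (inverse y) * exp (- inverse y)) has_real_derivative
        exp_inv_poly (exp_inv_pderiv p) x) (at x)"
      using 1 by (auto intro!: derivative_eq_intros simp: exp_inv_poly_def exp_inv_pderiv_def
          algebra_simps power2_eq_square)
    then show ?thesis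
      by (rule has_field_derivative_transform_within_open[of _ _ _ "{0<..}"])
        (use 1 in \<open>auto simp: exp_inv_poly_def\<close>)
  next
    case 2
    have "((\<lambda>y. 0) has_real_derivative exp_inv_poly (exp_inv_pderiv p) x) (at x)"
      using 2 by (simp add: exp_inv_poly_def)
    then show ?thesis
      by (rule has_field_derivative_transform_within_open[of _ _ _ "{..<0}"])
        (use 2 in \<open>auto simp: exp_inv_poly_def\<close>)
  next
    case 3
    then show ?thesis
      using exp_inv_poly_has_derivative_0[of p] by (simp add: exp_inv_poly_def)
  qed
qed

lemma continuous_on_exp_inv_poly: "continuous_on S (exp_inv_poly p)"
  by (rule continuous_at_imp_continuous_on) (blast intro: DERIV_isCont exp_inv_poly_has_derivative)

lemma exp_inv_poly_one: "exp_inv_poly 1 x = (if x > 0 then exp (- inverse x) else 0)"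
  by (simp add: exp_inv_poly_def)

lemma exp_inv_poly_one_bounds: "0 \<le> exp_inv_poly 1 x" "exp_inv_poly 1 x \<le> 1"
  by (auto simp: exp_inv_poly_one)

lemma tendsto_exp_inv_poly_one: "(exp_inv_poly 1 \<longlongrightarrow> 1) at_top"
proof (rule Lim_transform_eventually)
  show "((\<lambda>x::real. exp (- inverse x)) \<longlongrightarrow> 1) at_top"
    by real_asymp
  show "\<forall>\<^sub>F x in at_top. exp (- inverse x) = exp_inv_poly 1 x"
    using eventually_gt_at_top[of 0] by eventually_elim (simp add: exp_inv_poly_one)
qed

lemma exp_inv_pderiv_one: "exp_inv_pderiv 1 = [:0, 0, 1:]"
  by (simp add: exp_inv_pderiv_def)

lemma exp_inv_poly_square:
  "exp_inv_poly [:0, 0, 1:] x = (if x > 0 then inverse x * inverse x * exp (- inverse x) else 0)"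
  by (simp add: exp_inv_poly_def)

lemma exp_inv_poly_square_bound: "(x + 1) * exp_inv_poly [:0, 0, 1:] x \<le> 4"
proof (cases "x > 0")
  case True
  define y where "y = inverse x"
  have y: "y > 0"
    using True by (simp add: y_def)
  have "(1 + y/2)\<^sup>2 \<le> exp (y/2) ^ 2"
    using exp_ge_add_one_self[of "y/2"] y by (intro power_mono) auto
  also have "\<dots> = exp y"
    by (simp add: power2_eq_square flip: exp_add)
  finally have "(1 + y/2)\<^sup>2 \<le> exp y" .
  moreover have "y + y * y \<le> 4 * (1 + y/2)\<^sup>2"
    using y by (simp add: power2_eq_square algebra_simps)
  ultimately have "y + y * y \<le> 4 * exp y"
    by linarith
  then have "(y + y * y) * exp (- y) \<le> 4"
    by (simp add: exp_minus field_simps)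
  moreover have "(x + 1) * exp_inv_poly [:0, 0, 1:] x = (y + y * y) * exp (- y)"
    using True by (simp add: exp_inv_poly_square y_def field_simps)
  ultimately show ?thesis
    by simp
qed (simp add: exp_inv_poly_square)

lemma tendsto_exp_inv_poly_square: "((\<lambda>x. (x + 1) * exp_inv_poly [:0, 0, 1:] x) \<longlongrightarrow> 0) at_top"
proof (rule Lim_transform_eventually)
  show "((\<lambda>x::real. (x + 1) * (inverse x * inverse x * exp (- inverse x))) \<longlongrightarrow> 0) at_top"
    by real_asymp
  show "\<forall>\<^sub>F x in at_top. (x + 1) * (inverse x * inverse x * exp (- inverse x))
      = (x + 1) * exp_inv_poly [:0, 0, 1:] x"
    using eventually_gt_at_top[of 0] by eventually_elim (simp add: exp_inv_poly_square)
qed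

lemma higher_deriv_differentiable_if_deriv_closed:
  assumes "f \<in> A"
    and closed: "\<And>g. g \<in> A \<Longrightarrow> \<exists>g'\<in>A. \<forall>x. (g has_real_derivative g' x) (at x)"
  shows "(deriv^^j) f differentiable (at x)"
proof -
  have "(deriv^^j) f \<in> A" for j
  proof (induction j)
    case (Suc j)
    then obtain g' where "g' \<in> A" "\<And>x. ((deriv^^j) f has_real_derivative g' x) (at x)"
      using closed by blast
    moreover from this(2) have "deriv ((deriv^^j) f) = g'"
      by (intro ext DERIV_imp_deriv)
    ultimately show ?case
      by simp
  qed (simp add: assms(1))
  then show ?thesis
    using closed unfolding real_differentiable_def by blast
qed

inductive_set exp_inv_span :: "real \<Rightarrow> real \<Rightarrow> (real \<Rightarrow> real) set" for T s where
  basic: "(\<lambda>t. exp_inv_poly p (s * t - 1) * exp_inv_poly q (s * (T - t) - 1) * (exp (- t) * poly r t))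
    \<in> exp_inv_span T s"
| add: "f \<in> exp_inv_span T s \<Longrightarrow> g \<in> exp_inv_span T s
    \<Longrightarrow> (\<lambda>t. f t + g t) \<in> exp_inv_span T s"

lemma exp_inv_span_deriv_closed:
  assumes "f \<in> exp_inv_span T s"
  shows "\<exists>f'\<in>exp_inv_span T s. \<forall>t. (f has_real_derivative f' t) (at t)"
  using assms
proof induction
  case (basic p q r)
  let ?f' = "\<lambda>t. exp_inv_poly (exp_inv_pderiv p) (s * t - 1) * exp_inv_poly q (s * (T - t) - 1)
        * (exp (- t) * poly (smult s r) t)
      + exp_inv_poly p (s * t - 1) * exp_inv_poly (exp_inv_pderiv q) (s * (T - t) - 1)
        * (exp (- t) * poly (smult (- s) r) t)
      + exp_inv_poly p (s * t - 1) * exp_inv_poly q (s * (T - t) - 1)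
        * (exp (- t) * poly (pderiv r - r) t)"
  have "?f' \<in> exp_inv_span T s"
    by (intro exp_inv_span.intros)
  moreover have "((\<lambda>t. exp_inv_poly p (s * t - 1) * exp_inv_poly q (s * (T - t) - 1)
      * (exp (- t) * poly r t)) has_real_derivative ?f' t) (at t)" for t
    by (auto intro!: derivative_eq_intros exp_inv_poly_has_derivative[THEN DERIV_chain2]
        simp: algebra_simps)
  ultimately show ?case
    by (intro bexI[of _ ?f']) auto
next
  case (add f g)
  then obtain f' g' where "f' \<in> exp_inv_span T s" "\<And>t. (f has_real_derivative f' t) (at t)"
    and "g' \<in> exp_inv_span T s" "\<And>t. (g has_real_derivative g' t) (at t)"
    by blast
  then show ?case
    by (intro bexI[of _ "\<lambda>t. f' t + g' t"] allI DERIV_add exp_inv_span.add)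
qed

definition cutoff :: "real \<Rightarrow> real \<Rightarrow> real \<Rightarrow> real" where
  "cutoff T s t = exp_inv_poly 1 (s * t - 1) * exp_inv_poly 1 (s * (T - t) - 1)"

lemma test_fun_cutoff_mult:
  assumes "T > 0" "2 \<le> s * T"
  shows "test_fun T (\<lambda>t. cutoff T s t * (exp (- t) * poly r t))"
proof -
  have s: "s > 0"
    using assms by (intro zero_less_mult_pos2[of s T]) auto
  have "(\<lambda>t. cutoff T s t * (exp (- t) * poly r t)) \<in> exp_inv_span T s"
    unfolding cutoff_def by (rule exp_inv_span.basic)
  then have "\<forall>j x. (deriv^^j) (\<lambda>t. cutoff T s t * (exp (- t) * poly r t)) differentiable (at x)"
    by (blast intro: higher_deriv_differentiable_if_deriv_closed exp_inv_span_deriv_closed)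
  moreover have "cutoff T s t = 0" if "t \<notin> {1/s..T - 1/s}" for t
    using that s by (auto simp: cutoff_def exp_inv_poly_def field_simps)
  moreover have "0 < 1/s" "1/s \<le> T - 1/s" "T - 1/s < T"
    using s assms by (auto simp: field_simps)
  ultimately show ?thesis
    unfolding test_fun_def by (intro conjI exI[of _ "1/s"] exI[of _ "T - 1/s"]) auto
qed

definition cutoff_deriv :: "real \<Rightarrow> real \<Rightarrow> real \<Rightarrow> real" where
  "cutoff_deriv T s t = s * exp_inv_poly [:0, 0, 1:] (s * t - 1) * exp_inv_poly 1 (s * (T - t) - 1)
    - s * exp_inv_poly 1 (s * t - 1) * exp_inv_poly [:0, 0, 1:] (s * (T - t) - 1)"

lemma cutoff_has_derivative: "(cutoff T s has_real_derivative cutoff_deriv T s t) (at t)"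
  unfolding cutoff_def[abs_def] cutoff_deriv_def
  by (auto intro!: derivative_eq_intros exp_inv_poly_has_derivative[THEN DERIV_chain2]
      simp: exp_inv_pderiv_one algebra_simps)

lemma continuous_on_cutoff: "continuous_on S (cutoff T s)"
  by (rule continuous_at_imp_continuous_on) (blast intro: DERIV_isCont cutoff_has_derivative)

lemma continuous_on_cutoff_deriv: "continuous_on S (cutoff_deriv T s)"
  unfolding cutoff_deriv_def
  by (intro continuous_intros continuous_on_compose2[OF continuous_on_exp_inv_poly]) auto

lemma cutoff_bounds: "0 \<le> cutoff T s t" "cutoff T s t \<le> 1"
  unfolding cutoff_def using exp_inv_poly_one_bounds
  by (auto intro: mult_nonneg_nonneg mult_le_one)

lemma filterlim_mult_const_minus_one:
  assumes "filterlim s at_top F" "(c::real) > 0"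
  shows "filterlim (\<lambda>i. s i * c - 1) at_top F"
proof -
  have "filterlim (\<lambda>i. - 1 + c * s i) at_top F"
    by (intro filterlim_tendsto_add_at_top[OF tendsto_const] filterlim_tendsto_pos_mult_at_top
        [OF tendsto_const assms(2,1)])
  then show ?thesis
    by (simp add: algebra_simps)
qed

lemma tendsto_cutoff:
  assumes s: "filterlim s at_top sequentially" and t: "t \<in> {0<..<T}"
  shows "(\<lambda>i. cutoff T (s i) t) \<longlonglongrightarrow> 1"
proof -
  note lim = filterlim_mult_const_minus_one[OF s]
  have "(\<lambda>i. exp_inv_poly 1 (s i * t - 1) * exp_inv_poly 1 (s i * (T - t) - 1)) \<longlonglongrightarrow> 1 * 1"
    using t by (intro tendsto_mult filterlim_compose[OF tendsto_exp_inv_poly_one lim]) auto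
  then show ?thesis
    by (simp add: cutoff_def)
qed

lemma rho_mult_cutoff_deriv:
  "poly (rho T) t * cutoff_deriv T s t
    = (T - t) * ((s * t - 1 + 1) * exp_inv_poly [:0, 0, 1:] (s * t - 1)) * exp_inv_poly 1 (s * (T - t) - 1)
    - t * ((s * (T - t) - 1 + 1) * exp_inv_poly [:0, 0, 1:] (s * (T - t) - 1)) * exp_inv_poly 1 (s * t - 1)"
  by (simp add: poly_rho cutoff_deriv_def algebra_simps)

lemma exp_inv_poly_square_weighted_bounds:
  assumes "0 \<le> a" "a \<le> T"
  shows "0 \<le> a * ((x + 1) * exp_inv_poly [:0, 0, 1:] x) * exp_inv_poly 1 y"
    and "a * ((x + 1) * exp_inv_poly [:0, 0, 1:] x) * exp_inv_poly 1 y \<le> T * 4"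
proof -
  have w: "0 \<le> (x + 1) * exp_inv_poly [:0, 0, 1:] x"
    by (simp add: exp_inv_poly_square)
  then show "0 \<le> a * ((x + 1) * exp_inv_poly [:0, 0, 1:] x) * exp_inv_poly 1 y"
    using assms exp_inv_poly_one_bounds by simp
  have "a * ((x + 1) * exp_inv_poly [:0, 0, 1:] x) \<le> T * 4"
    using assms w exp_inv_poly_square_bound by (intro mult_mono) auto
  moreover have "a * ((x + 1) * exp_inv_poly [:0, 0, 1:] x) * exp_inv_poly 1 y
      \<le> a * ((x + 1) * exp_inv_poly [:0, 0, 1:] x)"
    using assms w exp_inv_poly_one_bounds[of y] by (intro mult_left_le) auto
  ultimately show "a * ((x + 1) * exp_inv_poly [:0, 0, 1:] x) * exp_inv_poly 1 y \<le> T * 4"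
    by linarith
qed

lemma rho_cutoff_deriv_bound:
  assumes "t \<in> {0..T}"
  shows "\<bar>poly (rho T) t * cutoff_deriv T s t\<bar> \<le> 4 * T"
  using exp_inv_poly_square_weighted_bounds[of "T - t" T "s * t - 1" "s * (T - t) - 1"]
    exp_inv_poly_square_weighted_bounds[of t T "s * (T - t) - 1" "s * t - 1"] assms
  unfolding rho_mult_cutoff_deriv by auto

lemma tendsto_rho_cutoff_deriv:
  assumes s: "filterlim s at_top sequentially" and t: "t \<in> {0<..<T}"
  shows "(\<lambda>i. poly (rho T) t * cutoff_deriv T (s i) t) \<longlonglongrightarrow> 0"
proof -
  note lim = filterlim_mult_const_minus_one[OF s]
  have "(\<lambda>i. (T - t) * ((s i * t - 1 + 1) * exp_inv_poly [:0, 0, 1:] (s i * t - 1))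
      * exp_inv_poly 1 (s i * (T - t) - 1)
    - t * ((s i * (T - t) - 1 + 1) * exp_inv_poly [:0, 0, 1:] (s i * (T - t) - 1))
      * exp_inv_poly 1 (s i * t - 1)) \<longlonglongrightarrow> (T - t) * 0 * 1 - t * 0 * 1"
    using t by (intro tendsto_intros filterlim_compose[OF tendsto_exp_inv_poly_square lim]
        filterlim_compose[OF tendsto_exp_inv_poly_one lim]) auto
  then show ?thesis
    unfolding rho_mult_cutoff_deriv by simp
qed

lemma tendsto_set_integral_cutoff:
  assumes u: "set_integrable lborel {0..T} u" and w: "continuous_on {0..T} w"
    and s: "filterlim s at_top sequentially"
  shows "(\<lambda>i. LINT t:{0..T}|lborel. u t * (cutoff T (s i) t * w t))
    \<longlonglongrightarrow> (LINT t:{0..T}|lborel. u t * w t)"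
proof -
  obtain M where M: "\<And>t. t \<in> {0..T} \<Longrightarrow> \<bar>w t\<bar> \<le> M"
    using continuous_on_Icc_bound[OF w] by blast
  show ?thesis
  proof (rule set_integral_dominated_convergence_Icc[OF u])
    show "\<bar>cutoff T (s i) t * w t\<bar> \<le> M" if "t \<in> {0..T}" for i t
    proof -
      have "cutoff T (s i) t * \<bar>w t\<bar> \<le> 1 * M"
        using cutoff_bounds M[OF that] by (intro mult_mono) auto
      then show ?thesis
        using cutoff_bounds(1) by (simp add: abs_mult)
    qed
    show "(\<lambda>i. cutoff T (s i) t * w t) \<longlonglongrightarrow> w t" if "t \<in> {0<..<T}" for t
      using tendsto_mult[OF tendsto_cutoff[OF s that] tendsto_const[of "w t"]] by simp
  qed (intro continuous_intros continuous_on_cutoff w)+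
qed

lemma tendsto_set_integral_cutoff_deriv:
  assumes u: "set_integrable lborel {0..T} u" and w: "continuous_on {0..T} w"
    and s: "filterlim s at_top sequentially"
  shows "(\<lambda>i. LINT t:{0..T}|lborel. u t * (poly (rho T) t * cutoff_deriv T (s i) t * w t))
    \<longlonglongrightarrow> 0"
proof -
  obtain M where M: "\<And>t. t \<in> {0..T} \<Longrightarrow> \<bar>w t\<bar> \<le> M"
    using continuous_on_Icc_bound[OF w] by blast
  have "(\<lambda>i. LINT t:{0..T}|lborel. u t * (poly (rho T) t * cutoff_deriv T (s i) t * w t))
      \<longlonglongrightarrow> (LINT t:{0..T}|lborel. u t * 0)"
  proof (rule set_integral_dominated_convergence_Icc[OF u])
    show "\<bar>poly (rho T) t * cutoff_deriv T (s i) t * w t\<bar> \<le> 4 * T * M" if "t \<in> {0..T}" for i t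
      unfolding abs_mult[of _ "w t"]
      using rho_cutoff_deriv_bound[OF that, of "s i"] M[OF that] by (intro mult_mono) auto
    show "(\<lambda>i. poly (rho T) t * cutoff_deriv T (s i) t * w t) \<longlonglongrightarrow> 0" if "t \<in> {0<..<T}" for t
      using tendsto_mult[OF tendsto_rho_cutoff_deriv[OF s that] tendsto_const[of "w t"]] by simp
  qed (intro continuous_intros continuous_on_cutoff_deriv w continuous_on_poly_id)+
  then show ?thesis
    by simp
qed

section \<open>Weak derivatives against exponentially weighted polynomials\<close>

lemma weak_deriv_cutoff_mult:
  assumes T: "T > 0" "2 \<le> s * T" and f: "L2_on T f"
    and weak: "\<And>\<phi>. test_fun T \<phi> \<Longrightarrow>
      (LINT t:{0..T}|lborel. f t * deriv \<phi> t) = - (LINT t:{0..T}|lborel. g t * \<phi> t)"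
  shows "(LINT t:{0..T}|lborel. f t * (poly (rho T) t * cutoff_deriv T s t * (exp (- t) * poly q t)))
      + (LINT t:{0..T}|lborel. f t * (cutoff T s t * (exp (- t) * poly (pderiv (rho T * q) - rho T * q) t)))
    = - (LINT t:{0..T}|lborel. g t * (cutoff T s t * (exp (- t) * poly (rho T * q) t)))"
proof -
  have exp_poly: "((\<lambda>t. exp (- t) * poly p t) has_real_derivative exp (- t) * poly (pderiv p - p) t) (at t)"
    for p t by (auto intro!: derivative_eq_intros simp: algebra_simps)
  have deriv: "deriv (\<lambda>t. cutoff T s t * (exp (- t) * poly (rho T * q) t)) t
      = poly (rho T) t * cutoff_deriv T s t * (exp (- t) * poly q t)
        + cutoff T s t * (exp (- t) * poly (pderiv (rho T * q) - rho T * q) t)" for t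
    by (intro DERIV_imp_deriv DERIV_cong[OF DERIV_mult[OF cutoff_has_derivative exp_poly]])
      (simp add: algebra_simps)
  have "set_integrable lborel {0..T}
      (\<lambda>t. f t * (poly (rho T) t * cutoff_deriv T s t * (exp (- t) * poly q t)))"
    "set_integrable lborel {0..T}
      (\<lambda>t. f t * (cutoff T s t * (exp (- t) * poly (pderiv (rho T * q) - rho T * q) t)))"
    by (intro set_integrable_L2_mult f L2_on_continuous continuous_intros continuous_on_cutoff
        continuous_on_cutoff_deriv continuous_on_poly_id)+
  moreover note weak[OF test_fun_cutoff_mult[OF T], of "rho T * q"]
  ultimately show ?thesis
    unfolding deriv distrib_left by simp
qed

text \<open>
  e^(-t) rho q is not a test function, but its products with \<open>cutoff T s\<close> are, and they
  converge to it as s tends to infinity. The factor rho absorbs the blow-up of the cutoff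
  derivatives at the end points (\<open>rho_cutoff_deriv_bound\<close>), so dominated convergence applies.
\<close>

lemma weak_deriv_exp_rho_mult:
  assumes T: "T > 0" and f: "L2_on T f" and g: "L2_on T g"
    and weak: "\<And>\<phi>. test_fun T \<phi> \<Longrightarrow>
      (LINT t:{0..T}|lborel. f t * deriv \<phi> t) = - (LINT t:{0..T}|lborel. g t * \<phi> t)"
  shows "(LINT t:{0..T}|lborel. f t * (exp (- t) * poly (pderiv (rho T * q) - rho T * q) t))
    = - (LINT t:{0..T}|lborel. g t * (exp (- t) * poly (rho T * q) t))"
proof -
  define s :: "nat \<Rightarrow> real" where "s i = (real i + 2) / T" for i
  have s: "filterlim s at_top sequentially"
    unfolding s_def using T by real_asymp
  have "(\<lambda>i. (LINT t:{0..T}|lborel. f t * (poly (rho T) t * cutoff_deriv T (s i) t * (exp (- t) * poly q t)))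
      + (LINT t:{0..T}|lborel. f t * (cutoff T (s i) t
        * (exp (- t) * poly (pderiv (rho T * q) - rho T * q) t))))
    \<longlonglongrightarrow> 0 + (LINT t:{0..T}|lborel. f t * (exp (- t) * poly (pderiv (rho T * q) - rho T * q) t))"
    using set_integrable_L2[OF f] by (intro tendsto_add tendsto_set_integral_cutoff
        tendsto_set_integral_cutoff_deriv s continuous_intros continuous_on_poly_id)
  moreover have "(\<lambda>i. - (LINT t:{0..T}|lborel. g t * (cutoff T (s i) t * (exp (- t) * poly (rho T * q) t))))
      \<longlonglongrightarrow> - (LINT t:{0..T}|lborel. g t * (exp (- t) * poly (rho T * q) t))"
    using set_integrable_L2[OF g]
    by (intro tendsto_minus tendsto_set_integral_cutoff s continuous_intros continuous_on_poly_id)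
  moreover have "2 \<le> s i * T" for i
    using T by (simp add: s_def)
  ultimately show ?thesis
    using LIMSEQ_unique weak_deriv_cutoff_mult[OF T _ f weak] by fastforce
qed

lemma test_fun_deriv:
  assumes "test_fun T \<phi>"
  shows "test_fun T (deriv \<phi>)"
proof -
  obtain a b where ab: "0 < a" "a \<le> b" "b < T" "\<And>x. x \<notin> {a..b} \<Longrightarrow> \<phi> x = 0"
    using assms unfolding test_fun_def by blast
  have "deriv \<phi> x = 0" if "x \<notin> {a..b}" for x
  proof -
    have "((\<lambda>_. 0) has_real_derivative 0) (at x)"
      by simp
    then have "(\<phi> has_real_derivative 0) (at x)"
      by (rule has_field_derivative_transform_within_open[of _ _ _ "- {a..b}"]) (use that ab in auto)
    then show ?thesis
      by (rule DERIV_imp_deriv)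
  qed
  moreover have "(deriv^^j) (deriv \<phi>) differentiable (at x)" for j x
    using assms unfolding test_fun_def by (metis funpow_Suc_right comp_apply)
  ultimately show ?thesis
    unfolding test_fun_def using ab by blast
qed

lemma sobolev_data_L2: "sobolev_data T k v \<Longrightarrow> j \<le> k \<Longrightarrow> L2_on T (v j)"
  by (simp add: sobolev_data_def)

lemma sobolev_data_weak_deriv:
  assumes v: "sobolev_data T k v" and "l < k" and \<phi>: "test_fun T \<phi>"
  shows "(LINT t:{0..T}|lborel. v l t * deriv \<phi> t) = - (LINT t:{0..T}|lborel. v (Suc l) t * \<phi> t)"
proof -
  have weak: "(LINT t:{0..T}|lborel. v 0 t * (deriv^^j) \<psi> t) = (-1)^j * (LINT t:{0..T}|lborel. v j t * \<psi> t)"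
    if "j \<le> k" "test_fun T \<psi>" for j \<psi>
    using v that unfolding sobolev_data_def by blast
  have "(-1)^l * (LINT t:{0..T}|lborel. v l t * deriv \<phi> t)
      = (LINT t:{0..T}|lborel. v 0 t * (deriv^^Suc l) \<phi> t)"
    using weak[of l "deriv \<phi>"] assms(2) test_fun_deriv[OF \<phi>] by (simp add: funpow_swap1)
  also have "\<dots> = (-1)^l * - (LINT t:{0..T}|lborel. v (Suc l) t * \<phi> t)"
    using weak[of "Suc l" \<phi>] assms(2) \<phi> by simp
  finally show ?thesis
    by (rule mult_left_cancel[THEN iffD1, rotated]) simp
qed

text \<open>(e^(-t) p)' = e^(-t) (exp_pderiv p).\<close>

definition exp_pderiv :: "real poly \<Rightarrow> real poly" where
  "exp_pderiv p = pderiv p - p"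

lemma exp_pderiv_power_dvd: "r ^ Suc m dvd p \<Longrightarrow> r ^ m dvd exp_pderiv p"
  unfolding exp_pderiv_def
  by (intro dvd_diff pderiv_power_dvd) (auto intro: dvd_trans[OF dvd_power_le[of r r m "Suc m"]])

lemma pderiv_sum: "pderiv (\<Sum>i\<in>A. f i) = (\<Sum>i\<in>A. pderiv (f i))"
  using higher_pderiv_sum[of 1 f A] by simp

lemma higher_pderiv_eq_sum_exp_pderiv:
  "(pderiv^^k) p = (\<Sum>i\<le>k. smult (real (k choose i)) ((exp_pderiv^^i) p))"
proof (induction k)
  case (Suc k)
  define x where "x i = (exp_pderiv^^i) p" for i
  have "(pderiv^^Suc k) p = (\<Sum>i\<le>k. smult (real (k choose i)) (pderiv (x i)))"
    by (simp only: funpow.simps(2) o_apply Suc.IH pderiv_sum pderiv_smult x_def)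
  also have "\<dots> = (\<Sum>i\<le>k. smult (real (k choose i)) (x (Suc i)))
      + (\<Sum>i\<le>k. smult (real (k choose i)) (x i))"
    by (simp add: x_def exp_pderiv_def smult_diff_right sum_subtractf)
  also have "(\<Sum>i\<le>k. smult (real (k choose i)) (x i))
      = (\<Sum>i\<le>Suc k. smult (real (k choose i)) (x i))"
    by simp
  also have "\<dots> = x 0 + (\<Sum>i\<le>k. smult (real (k choose Suc i)) (x (Suc i)))"
    by (subst sum.atMost_Suc_shift) simp
  also have "(\<Sum>i\<le>k. smult (real (k choose i)) (x (Suc i))) + \<dots>
      = x 0 + (\<Sum>i\<le>k. smult (real (Suc k choose Suc i)) (x (Suc i)))"
    by (simp add: sum.distrib[symmetric] smult_add_left algebra_simps)
  also have "\<dots> = (\<Sum>i\<le>Suc k. smult (real (Suc k choose i)) ((exp_pderiv^^i) p))"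
    by (subst sum.atMost_Suc_shift) (simp add: x_def)
  finally show ?case .
qed simp

lemma weak_deriv_higher_exp_pderiv:
  assumes T: "T > 0" and v: "sobolev_data T k v" and "l + m \<le> k"
  shows "(LINT t:{0..T}|lborel. v l t * (exp (- t) * poly ((exp_pderiv^^m) (rho T ^ k * p)) t))
    = (-1)^m * (LINT t:{0..T}|lborel. v (l + m) t * (exp (- t) * poly (rho T ^ k * p) t))"
  using assms(3)
proof (induction m arbitrary: l)
  case (Suc m)
  have "rho T ^ Suc (k - Suc m) dvd (exp_pderiv^^m) (rho T ^ k * p)"
    using funpow_power_dvd[of "rho T" exp_pderiv m k, OF exp_pderiv_power_dvd] Suc.prems
    by (simp add: Suc_diff_Suc)
  then obtain q where q: "(exp_pderiv^^m) (rho T ^ k * p) = rho T * q"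
    by (metis dvd_def dvd_mult_left power_Suc)
  have "(LINT t:{0..T}|lborel. v l t * (exp (- t) * poly ((exp_pderiv^^Suc m) (rho T ^ k * p)) t))
      = - (LINT t:{0..T}|lborel. v (Suc l) t * (exp (- t) * poly (rho T * q) t))"
    unfolding funpow.simps(2) o_apply q exp_pderiv_def
    using Suc.prems by (intro weak_deriv_exp_rho_mult T sobolev_data_L2[OF v]
        sobolev_data_weak_deriv[OF v]) auto
  also have "\<dots> = (-1)^Suc m * (LINT t:{0..T}|lborel. v (l + Suc m) t * (exp (- t) * poly (rho T ^ k * p) t))"
    using Suc.IH[of "Suc l"] Suc.prems by (simp add: q)
  finally show ?case .
qed simp

definition weighted_legendre :: "real \<Rightarrow> nat \<Rightarrow> nat \<Rightarrow> real \<Rightarrow> real" where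
  "weighted_legendre T k n t = legendre_scale T n / sqrt (eigen_prod n k)
    * (sqrt (poly (rho T) t) ^ k * poly ((pderiv^^k) (rodrigues T n)) t)"

lemma continuous_on_weighted_legendre: "continuous_on S (weighted_legendre T k n)"
  unfolding weighted_legendre_def by (intro continuous_intros continuous_on_poly_id)

lemma sqrt_rho_power_square:
  assumes "t \<in> {0..T}"
  shows "sqrt (poly (rho T) t) ^ k * sqrt (poly (rho T) t) ^ k = poly (rho T) t ^ k"
  using assms by (simp add: poly_rho flip: power_mult_distrib)

lemma weighted_legendre_orthonormal:
  assumes T: "T > 0" and "k \<le> n" "k \<le> m"
  shows "(LINT t:{0..T}|lborel. weighted_legendre T k n t * weighted_legendre T k m t)
    = (if n = m then 1 else 0)"
proof -
  have "(LINT t:{0..T}|lborel. weighted_legendre T k n t * weighted_legendre T k m t)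
      = legendre_scale T n / sqrt (eigen_prod n k) * (legendre_scale T m / sqrt (eigen_prod m k))
        * poly_integral T (rho T ^ k * (pderiv^^k) (rodrigues T n) * (pderiv^^k) (rodrigues T m))"
  proof -
    have "weighted_legendre T k n t * weighted_legendre T k m t
        = legendre_scale T n / sqrt (eigen_prod n k) * (legendre_scale T m / sqrt (eigen_prod m k))
          * poly (rho T ^ k * (pderiv^^k) (rodrigues T n) * (pderiv^^k) (rodrigues T m)) t"
      if "t \<in> {0..T}" for t
      by (simp add: weighted_legendre_def sqrt_rho_power_square[OF that, symmetric] mult_ac)
    then show ?thesis
      unfolding poly_integral_def set_integral_mult_right[symmetric]
      by (intro set_lebesgue_integral_cong) auto
  qed
  also have "\<dots> = (if n = m then 1 else 0)"
    using eigen_prod_pos[OF assms(2)] legendre_scale_rodrigues_orthonormal[OF T, of n m]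
    by (auto simp: poly_integral_weighted_higher_pderiv_rodrigues T less_imp_le rodrigues_orthogonal)
  finally show ?thesis .
qed

definition sobolev_weight :: "real \<Rightarrow> nat \<Rightarrow> real \<Rightarrow> real" where
  "sobolev_weight T k t = exp (- t) * sqrt (poly (rho T) t) ^ k"

lemma continuous_on_sobolev_weight: "continuous_on S (sobolev_weight T k)"
  unfolding sobolev_weight_def by (intro continuous_intros continuous_on_poly_id)

lemma sobolev_weight_square_le:
  assumes "t \<in> {0..T}"
  shows "(sobolev_weight T k t)\<^sup>2 \<le> T ^ (2 * k)"
proof -
  have "(sobolev_weight T k t)\<^sup>2 = (exp (- t))\<^sup>2 * poly (rho T) t ^ k"
    using sqrt_rho_power_square[OF assms, of k]
    by (simp add: sobolev_weight_def power2_eq_square mult_ac)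
  also have "\<dots> \<le> 1 * (T\<^sup>2) ^ k"
    using assms
    by (intro mult_mono power_mono) (auto simp: poly_rho power2_eq_square intro: mult_mono
        simp flip: exp_add)
  finally show ?thesis
    by (simp add: power_mult)
qed

lemma set_integral_square_mult_sobolev_weight_le:
  assumes u: "L2_on T u"
  shows "(LINT t:{0..T}|lborel. (u t * sobolev_weight T k t)\<^sup>2)
    \<le> T ^ (2 * k) * (LINT t:{0..T}|lborel. (u t)\<^sup>2)"
proof -
  have "(LINT t:{0..T}|lborel. (u t * sobolev_weight T k t)\<^sup>2)
      \<le> (LINT t:{0..T}|lborel. T ^ (2 * k) * (u t)\<^sup>2)"
  proof (rule set_integral_mono)
    show "set_integrable lborel {0..T} (\<lambda>t. (u t * sobolev_weight T k t)\<^sup>2)"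
      using L2_on_mult_continuous[OF u continuous_on_sobolev_weight] by (simp add: L2_on_def)
    show "set_integrable lborel {0..T} (\<lambda>t. T ^ (2 * k) * (u t)\<^sup>2)"
      using u by (simp add: L2_on_def)
    show "(u t * sobolev_weight T k t)\<^sup>2 \<le> T ^ (2 * k) * (u t)\<^sup>2" if "t \<in> {0..T}" for t
      using mult_left_mono[OF sobolev_weight_square_le[OF that, of k], of "(u t)\<^sup>2"]
      by (simp add: power_mult_distrib mult.commute)
  qed
  then show ?thesis
    by simp
qed

section \<open>Estimating the Legendre coefficients\<close>

lemma weighted_inner_legendrePsi:
  assumes "T > 0"
  shows "weighted_inner T u (legendrePsi T n) = (LINT t:{0..T}|lborel. u t * exp (- t) * legendreQ T n t)"
proof -
  have pointwise: "exp (-2 * t) * u t * (exp t * legendreQ T n t) = u t * exp (- t) * legendreQ T n t"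
    for t by (simp add: mult_ac flip: exp_add)
  show ?thesis
    unfolding weighted_inner_def legendrePsi_def pointwise ..
qed

lemma rodrigues_eq_sum_exp_pderiv:
  assumes "k \<le> n"
  shows "rodrigues T n = smult ((-1)^k / eigen_prod n k)
    (\<Sum>i\<le>k. smult (real (k choose i)) ((exp_pderiv^^i) (rho T ^ k * (pderiv^^k) (rodrigues T n))))"
  using eigen_prod_pos[OF assms]
  by (simp add: higher_pderiv_eq_sum_exp_pderiv[symmetric] higher_pderiv_rho_power_mult_higher_pderiv_rodrigues
      power_mult_distrib[symmetric])

lemma weighted_inner_legendrePsi_eq_sum:
  assumes T: "T > 0" and v: "sobolev_data T k v" and "k \<le> n"
  shows "weighted_inner T (v 0) (legendrePsi T n)
    = (-1)^k * legendre_scale T n / eigen_prod n k * (\<Sum>i\<le>k. real (k choose i) * (-1)^i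
      * (LINT t:{0..T}|lborel. v i t * (exp (- t) * poly (rho T ^ k * (pderiv^^k) (rodrigues T n)) t)))"
proof -
  define G where "G = rho T ^ k * (pderiv^^k) (rodrigues T n)"
  define c where "c i = (-1)^k * legendre_scale T n / eigen_prod n k * real (k choose i)" for i
  have "weighted_inner T (v 0) (legendrePsi T n)
      = (LINT t:{0..T}|lborel. \<Sum>i\<le>k. c i * (v 0 t * (exp (- t) * poly ((exp_pderiv^^i) G) t)))"
    unfolding weighted_inner_legendrePsi[OF T] legendreQ_eq_rodrigues[OF T]
    by (subst rodrigues_eq_sum_exp_pderiv[OF assms(3)])
      (simp add: G_def c_def poly_sum sum_distrib_left mult_ac)
  also have "\<dots> = (\<Sum>i\<le>k. c i * (LINT t:{0..T}|lborel. v 0 t * (exp (- t) * poly ((exp_pderiv^^i) G) t)))"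
  proof -
    have "set_integrable lborel {0..T} (\<lambda>t. v 0 t * (exp (- t) * poly p t))" for p
      by (intro set_integrable_L2_mult sobolev_data_L2[OF v] L2_on_continuous continuous_intros
          continuous_on_poly_id) simp
    then show ?thesis
      by (simp add: set_integral_sum)
  qed
  also have "\<dots> = (\<Sum>i\<le>k. c i * ((-1)^i * (LINT t:{0..T}|lborel. v i t * (exp (- t) * poly G t))))"
    unfolding G_def by (intro sum.cong refl) (simp add: weak_deriv_higher_exp_pderiv[OF T v])
  finally show ?thesis
    by (simp add: c_def G_def sum_distrib_left mult_ac)
qed

lemma set_integral_sobolev_weight_weighted_legendre:
  "(LINT t:{0..T}|lborel. u t * sobolev_weight T k t * weighted_legendre T k n t)
    = legendre_scale T n / sqrt (eigen_prod n k)
      * (LINT t:{0..T}|lborel. u t * (exp (- t) * poly (rho T ^ k * (pderiv^^k) (rodrigues T n)) t))"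
proof -
  have "u t * sobolev_weight T k t * weighted_legendre T k n t
      = legendre_scale T n / sqrt (eigen_prod n k)
        * (u t * (exp (- t) * poly (rho T ^ k * (pderiv^^k) (rodrigues T n)) t))"
    if "t \<in> {0..T}" for t
    by (simp add: sobolev_weight_def weighted_legendre_def sqrt_rho_power_square[OF that, symmetric]
        mult_ac)
  then show ?thesis
    unfolding set_integral_mult_right[symmetric] by (intro set_lebesgue_integral_cong) auto
qed

lemma binomial_alternating_sum_square_le:
  "(\<Sum>i\<le>k. real (k choose i) * (-1)^i * b i)\<^sup>2 \<le> real (k + 1) * 4^k * (\<Sum>i\<le>k. (b i)\<^sup>2)"
proof -
  have "(\<Sum>i\<le>k. real (k choose i) * (-1)^i * b i)\<^sup>2
      \<le> (\<Sum>i\<le>k. (real (k choose i) * (-1)^i)\<^sup>2) * (\<Sum>i\<le>k. (b i)\<^sup>2)"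
    by (rule Cauchy_Schwarz_ineq_sum)
  also have "(\<Sum>i\<le>k. (real (k choose i) * (-1)^i)\<^sup>2) \<le> (\<Sum>i\<le>k. 4^k)"
  proof (intro sum_mono)
    fix i
    have "real (k choose i) \<le> 2^k"
      using binomial_le_pow2[of k i] by (simp flip: of_nat_le_iff)
    then have "(real (k choose i))\<^sup>2 \<le> (2^k)\<^sup>2"
      by (intro power_mono) auto
    moreover have "((2::real)^k)\<^sup>2 = 4^k" "((-1::real)^i)\<^sup>2 = 1"
      by (simp_all add: power2_eq_square flip: power_mult_distrib)
    ultimately show "(real (k choose i) * (-1)^i)\<^sup>2 \<le> 4^k"
      by (simp add: power_mult_distrib)
  qed
  then have "(\<Sum>i\<le>k. (real (k choose i) * (-1)^i)\<^sup>2) * (\<Sum>i\<le>k. (b i)\<^sup>2)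
      \<le> real (k + 1) * 4^k * (\<Sum>i\<le>k. (b i)\<^sup>2)"
    by (intro mult_right_mono sum_nonneg) auto
  finally show ?thesis .
qed

lemma legendre_coeff_high_mode_bound:
  assumes T: "T > 0" and v: "sobolev_data T k v" and n: "2 * k \<le> n"
  shows "real n ^ (2 * k) * (weighted_inner T (v 0) (legendrePsi T n))\<^sup>2
    \<le> 2^k * (real (k + 1) * 4^k)
      * (\<Sum>i\<le>k. (LINT t:{0..T}|lborel. v i t * sobolev_weight T k t * weighted_legendre T k n t)\<^sup>2)"
proof -
  define L where "L = eigen_prod n k"
  define b where "b i = (LINT t:{0..T}|lborel. v i t * sobolev_weight T k t * weighted_legendre T k n t)"
    for i
  have L: "L > 0"
    using eigen_prod_pos n by (simp add: L_def)
  have "weighted_inner T (v 0) (legendrePsi T n)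
      = (-1)^k / sqrt L * (\<Sum>i\<le>k. real (k choose i) * (-1)^i * b i)"
  proof -
    have "(-1)^k * a / L * (\<Sum>i\<le>k. x i * y i) = (-1)^k / sqrt L * (\<Sum>i\<le>k. x i * (a / sqrt L * y i))"
      for a :: real and x y :: "nat \<Rightarrow> real"
      using L by (simp add: sum_distrib_left field_simps flip: real_sqrt_mult)
    then show ?thesis
      using n unfolding b_def set_integral_sobolev_weight_weighted_legendre L_def
      by (simp add: weighted_inner_legendrePsi_eq_sum[OF T v])
  qed
  then have "real n ^ (2 * k) * (weighted_inner T (v 0) (legendrePsi T n))\<^sup>2
      = real n ^ (2 * k) / L * (\<Sum>i\<le>k. real (k choose i) * (-1)^i * b i)\<^sup>2"
    using L by (simp add: power_mult_distrib power_divide flip: power_mult)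
  also have "\<dots> \<le> 2^k * (real (k + 1) * 4^k * (\<Sum>i\<le>k. (b i)\<^sup>2))"
    using eigen_prod_lower_bound[OF n] L binomial_alternating_sum_square_le[of k b]
    by (intro mult_mono) (auto simp: L_def divide_le_eq)
  finally show ?thesis
    by (simp add: b_def mult_ac)
qed

lemma bessel_inequality_legendrePsi:
  assumes T: "T > 0" and u: "L2_on T u" and "finite S"
  shows "(\<Sum>n\<in>S. (weighted_inner T u (legendrePsi T n))\<^sup>2) \<le> (LINT t:{0..T}|lborel. (u t)\<^sup>2)"
proof -
  have weight: "sobolev_weight T 0 t = exp (- t)" for t
    by (simp add: sobolev_weight_def)
  have "(\<Sum>n\<in>S. (weighted_inner T u (legendrePsi T n))\<^sup>2)
      \<le> (LINT t:{0..T}|lborel. (u t * sobolev_weight T 0 t)\<^sup>2)"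
    unfolding weighted_inner_legendrePsi[OF T] weight
    by (intro bessel_inequality assms(3) L2_on_mult_continuous[OF u] L2_on_continuous
        continuous_on_legendreQ T continuous_intros) (auto simp: legendreQ_orthonormal[OF T])
  also have "\<dots> \<le> (LINT t:{0..T}|lborel. (u t)\<^sup>2)"
    using set_integral_square_mult_sobolev_weight_le[OF u, of 0] by simp
  finally show ?thesis .
qed

lemma low_modes_bound:
  assumes T: "T > 0" and u: "L2_on T u"
  shows "(\<Sum>n<N. real n ^ (2 * k) * (weighted_inner T u (legendrePsi T n))\<^sup>2)
    \<le> real N ^ (2 * k) * (LINT t:{0..T}|lborel. (u t)\<^sup>2)"
proof -
  have "(\<Sum>n<N. real n ^ (2 * k) * (weighted_inner T u (legendrePsi T n))\<^sup>2)
      \<le> (\<Sum>n<N. real N ^ (2 * k) * (weighted_inner T u (legendrePsi T n))\<^sup>2)"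
    by (intro sum_mono mult_right_mono power_mono) auto
  also have "\<dots> \<le> real N ^ (2 * k) * (LINT t:{0..T}|lborel. (u t)\<^sup>2)"
    using bessel_inequality_legendrePsi[OF T u, of "{..<N}"]
    by (simp add: sum_distrib_left[symmetric] mult_left_mono)
  finally show ?thesis .
qed

lemma high_modes_bound:
  assumes T: "T > 0" and v: "sobolev_data T k v"
  shows "(\<Sum>n\<in>{2 * k..<N}. real n ^ (2 * k) * (weighted_inner T (v 0) (legendrePsi T n))\<^sup>2)
    \<le> 2^k * (real (k + 1) * 4^k) * T ^ (2 * k) * Hk_norm_sq T k v"
proof -
  define K :: real where "K = 2^k * (real (k + 1) * 4^k)"
  define b where "b i n = (LINT t:{0..T}|lborel. v i t * sobolev_weight T k t * weighted_legendre T k n t)"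
    for i n
  have "(\<Sum>n\<in>{2 * k..<N}. real n ^ (2 * k) * (weighted_inner T (v 0) (legendrePsi T n))\<^sup>2)
      \<le> (\<Sum>n\<in>{2 * k..<N}. K * (\<Sum>i\<le>k. (b i n)\<^sup>2))"
    unfolding K_def b_def by (intro sum_mono legendre_coeff_high_mode_bound[OF T v]) auto
  also have "\<dots> = K * (\<Sum>i\<le>k. \<Sum>n\<in>{2 * k..<N}. (b i n)\<^sup>2)"
    by (simp add: sum_distrib_left sum.swap[of _ "{2 * k..<N}"])
  also have "\<dots> \<le> K * (\<Sum>i\<le>k. T ^ (2 * k) * (LINT t:{0..T}|lborel. (v i t)\<^sup>2))"
  proof (intro mult_left_mono sum_mono)
    fix i assume i: "i \<in> {..k}"
    have L2: "L2_on T (v i)"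
      using i sobolev_data_L2[OF v] by simp
    have "(\<Sum>n\<in>{2 * k..<N}. (b i n)\<^sup>2) \<le> (LINT t:{0..T}|lborel. (v i t * sobolev_weight T k t)\<^sup>2)"
      unfolding b_def
      by (intro bessel_inequality L2_on_mult_continuous L2 continuous_on_sobolev_weight L2_on_continuous
          continuous_on_weighted_legendre weighted_legendre_orthonormal[OF T]) auto
    also have "\<dots> \<le> T ^ (2 * k) * (LINT t:{0..T}|lborel. (v i t)\<^sup>2)"
      by (rule set_integral_square_mult_sobolev_weight_le[OF L2])
    finally show "(\<Sum>n\<in>{2 * k..<N}. (b i n)\<^sup>2) \<le> T ^ (2 * k) * (LINT t:{0..T}|lborel. (v i t)\<^sup>2)" .
  qed (simp add: K_def)
  finally show ?thesis
    by (simp add: K_def Hk_norm_sq_def sum_distrib_left mult.assoc)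
qed

lemma set_integral_square_le_Hk_norm_sq:
  assumes "j \<le> k"
  shows "(LINT t:{0..T}|lborel. (v j t)\<^sup>2) \<le> Hk_norm_sq T k v"
  unfolding Hk_norm_sq_def using assms
  by (intro member_le_sum[where f = "\<lambda>j. LINT t:{0..T}|lborel. (v j t)\<^sup>2"] set_integral_nonneg) auto

lemma legendre_coeff_partial_sum_bound:
  assumes T: "T > 0" and v: "sobolev_data T k v"
  shows "(\<Sum>n<N. real n ^ (2 * k) * (weighted_inner T (v 0) (legendrePsi T n))\<^sup>2)
    \<le> (real (2 * k) ^ (2 * k) + 2^k * (real (k + 1) * 4^k) * T ^ (2 * k)) * Hk_norm_sq T k v"
proof -
  let ?a = "\<lambda>n. real n ^ (2 * k) * (weighted_inner T (v 0) (legendrePsi T n))\<^sup>2"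
  have "(\<Sum>n<N. ?a n) \<le> (\<Sum>n \<in> {..<2 * k} \<union> {2 * k..<N}. ?a n)"
    by (intro sum_mono2) auto
  also have "\<dots> = (\<Sum>n<2 * k. ?a n) + (\<Sum>n\<in>{2 * k..<N}. ?a n)"
    by (intro sum.union_disjoint) auto
  finally have split: "(\<Sum>n<N. ?a n) \<le> (\<Sum>n<2 * k. ?a n) + (\<Sum>n\<in>{2 * k..<N}. ?a n)" .
  have "(\<Sum>n<2 * k. ?a n) \<le> real (2 * k) ^ (2 * k) * (LINT t:{0..T}|lborel. (v 0 t)\<^sup>2)"
    by (rule low_modes_bound[OF T sobolev_data_L2[OF v]]) simp
  also have "\<dots> \<le> real (2 * k) ^ (2 * k) * Hk_norm_sq T k v"
    by (intro mult_left_mono set_integral_square_le_Hk_norm_sq) auto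
  finally show ?thesis
    using split high_modes_bound[OF T v, of N] unfolding distrib_right by linarith
qed

theorem lemma2p1:
  fixes T :: real and k :: nat
  assumes "T > 0"
  shows "\<exists>C>0. \<forall>v. sobolev_data T k v \<longrightarrow>
           summable (\<lambda>n. real n ^ (2 * k) * \<bar>weighted_inner T (v 0) (legendrePsi T n)\<bar>\<^sup>2)
           \<and> (\<Sum>n. real n ^ (2 * k) * \<bar>weighted_inner T (v 0) (legendrePsi T n)\<bar>\<^sup>2)
               \<le> C * Hk_norm_sq T k v"
proof (intro exI conjI allI impI)
  let ?C = "real (2 * k) ^ (2 * k) + 2^k * (real (k + 1) * 4^k) * T ^ (2 * k)"
  show "?C > 0"
    using assms by (intro add_nonneg_pos) auto
  fix v assume v: "sobolev_data T k v"
  have bound: "(\<Sum>n<N. real n ^ (2 * k) * \<bar>weighted_inner T (v 0) (legendrePsi T n)\<bar>\<^sup>2)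
      \<le> ?C * Hk_norm_sq T k v" for N
    using legendre_coeff_partial_sum_bound[OF assms v] by simp
  show "summable (\<lambda>n. real n ^ (2 * k) * \<bar>weighted_inner T (v 0) (legendrePsi T n)\<bar>\<^sup>2)"
    by (rule summableI_nonneg_bounded[OF _ bound]) simp
  then show "(\<Sum>n. real n ^ (2 * k) * \<bar>weighted_inner T (v 0) (legendrePsi T n)\<bar>\<^sup>2)
      \<le> ?C * Hk_norm_sq T k v"
    by (rule suminf_le_const[OF _ bound])
qed

end
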